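(* Let $E$ be a $k$-dimensional subspace of $\mathbb{C}^n$ with $k>1$, and let $W$ be a nonzero subspace of $E$. Then $W$ is special in $E$ if and only if $W = E\cap P(W)$.
   Context: A polydiagonal is a subspace of $\mathbb{C}^n$ of the form $\{x\in\mathbb{C}^n : x_i=x_j \text{ for all } (i,j)\in R\}$ for some (possibly empty) set $R$ of pairs of indices in $\{1,\dots,n\}$; i.e. a subspace defined by equalities of coordinates. The fully synchrony subspace is $F=\{x_1=x_2=\cdots=x_n\}$ (contained in every polydiagonal). For a subspace $W\subseteq\mathbb{C}^n$, $P(W)$ denotes the smallest polydiagonal containing $W$ (the intersection of all polydiagonals containing $W$). Given a subspace $E$ of $\mathbb{C}^n$, a subspace $W$ of $E$ is called special in $E$ if for every subspace $U$ of $E$ with $\dim U=\dim W$ and $P(U)\subseteq P(W)$ one has $P(U)=P(W)$. *)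

theory Defs
  imports "HOL-Analysis.Analysis"
begin

text \<open>Vectors of C^n are modelled as complex ^ 'n with 'n a finite index type (n = CARD('n)).
  Subspaces are complex-linear subspaces (vec.subspace, scalar multiplication (*s)).\<close>

definition polydiagonal :: "(complex ^ 'n) set \<Rightarrow> bool" where
  "polydiagonal D \<longleftrightarrow> (\<exists>R :: ('n \<times> 'n) set. D = {x. \<forall>(i, j) \<in> R. x $ i = x $ j})"

definition polyhull :: "(complex ^ 'n) set \<Rightarrow> (complex ^ 'n) set" where
  "polyhull W = \<Inter> {D. polydiagonal D \<and> W \<subseteq> D}"

definition special_in :: "(complex ^ 'n) set \<Rightarrow> (complex ^ 'n) set \<Rightarrow> bool" where
  "special_in E W \<longleftrightarrow>
     (\<forall>U. vec.subspace U \<and> U \<subseteq> E \<and> vec.dim U = vec.dim W \<and> polyhull U \<subseteq> polyhull W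
          \<longrightarrow> polyhull U = polyhull W)"

end

theory Submission
  imports Defs
begin

text \<open>If \<open>W = E \<inter> P(W)\<close>, a competitor \<open>U\<close> with \<open>P(U) \<subseteq> P(W)\<close> lies in \<open>E \<inter> P(W) = W\<close>
  and has the dimension of \<open>W\<close>, so \<open>U = W\<close>. Conversely, if \<open>W\<close> is a proper subspace of
  \<open>V = E \<inter> P(W)\<close>, some \<open>u \<in> V\<close> has two different coordinates \<open>u\<^sub>i \<noteq> u\<^sub>j\<close> (otherwise \<open>V\<close> would
  consist of constant vectors and be the line spanned by any nonzero vector of \<open>W\<close>). The
  hyperplane \<open>x\<^sub>i = x\<^sub>j\<close> cuts \<open>V\<close> in codimension one, hence still contains a subspace \<open>U\<close> of
  dimension \<open>dim W\<close>; then \<open>P(U) \<subseteq> P(W)\<close>, but \<open>P(U)\<close> lies in the hyperplane and misses \<open>u \<in> P(W)\<close>,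
  so \<open>W\<close> is not special.\<close>

lemma polyhull_altdef:
  "polyhull W = {x. \<forall>i j. (\<forall>w\<in>W. w $ i = w $ j) \<longrightarrow> x $ i = x $ j}"
proof
  have "polydiagonal {x. \<forall>i j. (\<forall>w\<in>W. w $ i = w $ j) \<longrightarrow> x $ i = x $ j}"
    unfolding polydiagonal_def by (rule exI[of _ "{(i, j). \<forall>w\<in>W. w $ i = w $ j}"]) auto
  then show "polyhull W \<subseteq> {x. \<forall>i j. (\<forall>w\<in>W. w $ i = w $ j) \<longrightarrow> x $ i = x $ j}"
    unfolding polyhull_def by blast
next
  show "{x. \<forall>i j. (\<forall>w\<in>W. w $ i = w $ j) \<longrightarrow> x $ i = x $ j} \<subseteq> polyhull W"
    unfolding polyhull_def polydiagonal_def by blast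
qed

lemma subset_polyhull: "W \<subseteq> polyhull W"
  by (auto simp: polyhull_altdef)

lemma polyhull_subset_iff: "polyhull A \<subseteq> polyhull B \<longleftrightarrow> A \<subseteq> polyhull B"
  unfolding polyhull_altdef by blast

lemma polyhull_subset_coordinate_eq:
  "\<forall>w\<in>W. w $ i = w $ j \<Longrightarrow> x \<in> polyhull W \<Longrightarrow> x $ i = x $ j"
  unfolding polyhull_altdef by blast

lemma subspace_polyhull:
  fixes W :: "(complex ^ 'n) set"
  shows "vec.subspace (polyhull W)"
  unfolding vec.subspace_def polyhull_altdef
proof (intro conjI ballI allI)
  fix x y :: "complex ^ 'n"
  assume "x \<in> {x. \<forall>i j. (\<forall>w\<in>W. w $ i = w $ j) \<longrightarrow> x $ i = x $ j}"
    and "y \<in> {x. \<forall>i j. (\<forall>w\<in>W. w $ i = w $ j) \<longrightarrow> x $ i = x $ j}"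
  then show "x + y \<in> {x. \<forall>i j. (\<forall>w\<in>W. w $ i = w $ j) \<longrightarrow> x $ i = x $ j}"
    by simp metis
qed auto

lemma subspace_of_constant_vectors_eq:
  fixes V W :: "('a::field ^ 'n) set"
  assumes "vec.subspace W" "W \<noteq> {0}" "W \<subseteq> V" and const: "\<forall>v\<in>V. \<forall>i j. v $ i = v $ j"
  shows "W = V"
proof -
  obtain w where w: "w \<in> W" "w \<noteq> 0"
    using assms(1,2) vec.subspace_0 by blast
  then obtain k where k: "w $ k \<noteq> 0"
    by (metis vec_eq_iff zero_index)
  have "v \<in> W" if "v \<in> V" for v
  proof -
    have coord: "v $ i = (v $ k / w $ k) * w $ i" for i
    proof -
      have "v $ i = v $ k" "w $ i = w $ k"
        using const \<open>v \<in> V\<close> w(1) \<open>W \<subseteq> V\<close> by blast+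
      then show ?thesis
        using k by simp
    qed
    have "v = (v $ k / w $ k) *s w"
      unfolding vec_eq_iff vector_smult_component using coord by blast
    then show ?thesis
      using vec.subspace_scale[OF assms(1) w(1)] by metis
  qed
  then show ?thesis
    using \<open>W \<subseteq> V\<close> by blast
qed

lemma dim_le_Suc_dim_coordinate_section:
  fixes V :: "('a::field ^ 'n) set"
  assumes "vec.subspace V" "u \<in> V" "u $ i \<noteq> u $ j"
  shows "vec.dim V \<le> vec.dim {x\<in>V. x $ i = x $ j} + 1"
proof -
  let ?K = "{x\<in>V. x $ i = x $ j}"
  have "x \<in> vec.span (insert u ?K)" if "x \<in> V" for x
  proof -
    define t where "t = (x $ i - x $ j) / (u $ i - u $ j)"
    have "x - t *s u \<in> ?K"
      using vec.subspace_diff[OF assms(1) \<open>x \<in> V\<close> vec.subspace_scale[OF assms(1,2)]] assms(3)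
      by (auto simp: t_def field_simps)
    then have "x - t *s u + t *s u \<in> vec.span (insert u ?K)"
      by (intro vec.span_add vec.span_scale vec.span_base) auto
    then show ?thesis
      by simp
  qed
  then have "vec.dim V \<le> vec.dim (insert u ?K)"
    by (intro vec.dim_mono) blast
  also have "\<dots> \<le> vec.dim ?K + 1"
    by (simp add: vec.dim_insert)
  finally show ?thesis .
qed

lemma eq_inter_polyhull_if_special_in:
  fixes E W :: "(complex ^ 'n) set"
  assumes "vec.subspace E" "vec.subspace W" "W \<subseteq> E" "W \<noteq> {0}" and special: "special_in E W"
  shows "W = E \<inter> polyhull W"
proof (rule ccontr)
  define V where "V = E \<inter> polyhull W"
  assume "W \<noteq> E \<inter> polyhull W"
  then have "W \<noteq> V"
    by (simp add: V_def)
  have V: "vec.subspace V"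
    unfolding V_def using assms(1) subspace_polyhull vec.subspace_inter by blast
  have "W \<subseteq> V"
    unfolding V_def using assms(3) subset_polyhull by blast
  obtain u i j where u: "u \<in> V" "u $ i \<noteq> u $ j"
    using subspace_of_constant_vectors_eq[OF assms(2,4) \<open>W \<subseteq> V\<close>] \<open>W \<noteq> V\<close> by blast
  let ?K = "{x\<in>V. x $ i = x $ j}"
  have "vec.dim W < vec.dim V"
    using vec.subspace_dim_equal[OF assms(2) V \<open>W \<subseteq> V\<close>] \<open>W \<noteq> V\<close> by (meson not_less)
  then have "vec.dim W \<le> vec.dim ?K"
    using dim_le_Suc_dim_coordinate_section[OF V u] by simp
  then obtain U where U: "vec.subspace U" "U \<subseteq> vec.span ?K" "vec.dim U = vec.dim W"
    by (rule vec.choose_subspace_of_subspace)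
  have "vec.subspace ?K"
    using V unfolding vec.subspace_def by auto
  then have "U \<subseteq> ?K"
    using U(2) vec.span_minimal[OF order_refl] by blast
  then have "U \<subseteq> E" "polyhull U \<subseteq> polyhull W"
    by (auto simp: V_def polyhull_subset_iff)
  then have "polyhull U = polyhull W"
    using special U(1,3) unfolding special_in_def by blast
  moreover have "u \<in> polyhull W"
    using u(1) by (simp add: V_def)
  ultimately have "u $ i = u $ j"
    using polyhull_subset_coordinate_eq[of U i j u] \<open>U \<subseteq> ?K\<close> by blast
  with u(2) show False ..
qed

lemma special_in_if_eq_inter_polyhull:
  fixes E W :: "(complex ^ 'n) set"
  assumes "vec.subspace W" "W = E \<inter> polyhull W"
  shows "special_in E W"
  unfolding special_in_def
proof (intro allI impI)
  fix U assume U: "vec.subspace U \<and> U \<subseteq> E \<and> vec.dim U = vec.dim W \<and> polyhull U \<subseteq> polyhull W"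
  then have "U \<subseteq> W"
    using subset_polyhull assms(2) by blast
  then have "U = W"
    using vec.subspace_dim_equal[of U W] U assms(1) by simp
  then show "polyhull U = polyhull W"
    by simp
qed

theorem mainTheorem1:
  fixes E W :: "(complex ^ 'n) set"
  assumes "vec.subspace E" and "vec.dim E > 1"
    and "vec.subspace W" and "W \<subseteq> E" and "W \<noteq> {0}"
  shows "special_in E W \<longleftrightarrow> W = E \<inter> polyhull W"
  using eq_inter_polyhull_if_special_in[OF assms(1,3,4,5)]
    special_in_if_eq_inter_polyhull[OF assms(3)]
  by blast

end
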